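(* Let $\mathscr{I}_1\subseteq(0,1)$ and $\mathscr{I}_2\subseteq\mathbb{R}$, and let $f_\nu^\alpha:\mathbb{R}\to\mathbb{R}$ ($\nu\in\mathscr{I}_1$, $\alpha\in\mathscr{I}_2$) be even continuous functions and $\vartheta_\nu^\alpha\in[0,\infty)$ be numbers such that for some $C>0$, $\|f_\nu^\alpha\|_{L^\infty}\le C$ and $\vartheta_\nu^\alpha\le C\nu^2$ for all $\nu,\alpha$. Fix $q_*>0$. (i) Define \[ F_\nu^\alpha(X):=\int_{X+\vartheta_\nu^\alpha\tanh(q_*X)}^{X+\nu+\vartheta_\nu^\alpha\tanh(q_*X+q_*\nu)}f_\nu^\alpha(s)\,ds-\int_{X+\vartheta_\nu^\alpha\tanh(q_*X)}^{X+\nu+\vartheta_\nu^\alpha\tanh(q_*X)}f_\nu^\alpha(s)\,ds . \] Then $\sup_{\nu\in\mathscr{I}_1,\alpha\in\mathscr{I}_2,X\in\mathbb{R}}\nu^{-3}e^{2q_*|X|}|F_\nu^\alpha(X)|<\infty$. (ii) Suppose $0<q<q_*$ and $\sup_{\nu\in\mathscr{I}_1,\alpha\in\mathscr{I}_2,X\in\mathbb{R}}e^{q|X|}|f_\nu^\alpha(X)|<\infty$. Then there exist $L_\nu^{\alpha,\int}\in\mathbb{R}$ such that \[ \sup_{\nu\in\mathscr{I}_1,\alpha\in\mathscr{I}_2}\left[\left(\sup_{X\in\mathbb{R}}e^{q|X|}\left|\int_0^Xf_\nu^\alpha(s)\,ds-L_\nu^{\alpha,\int}\tanh\left(\frac{q_*X}{2}\right)\right|\right)+|L_\nu^{\alpha,\int}|\right]<\infty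 . \] *)

theory Defs
  imports "HOL-Analysis.Analysis"
begin

end

theory Submission
  imports Defs
begin

text \<open>
  Both parts are estimates for the primitive G x = int_0^x f.
  In (i) the two integrals share their lower limit, so their difference is G b1 - G b2 with
  |b1 - b2| = theta |tanh (qs X + qs nu) - tanh (qs X)|. Since |G'| <= C and theta <= C nu^2, and
  the mean value theorem with 1 - tanh^2 t <= 4 exp (-2 |t|) bounds the tanh difference by
  4 qs nu exp (2 qs) exp (-2 qs |X|), the difference is O(nu^3 exp (-2 qs |X|)).
  In (ii), |f x| <= K exp (-q |x|) makes G converge at +infinity to some L at rate
  K/q exp (-q x), while 1 - tanh (qs x / 2) <= 2 exp (-qs x) <= 2 exp (-q x); evenness of f
  makes G odd, which transfers the estimate to x < 0.
\<close>

lemma primitive_has_real_derivative: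
  fixes f :: "real \<Rightarrow> real"
  assumes "continuous_on UNIV f"
  shows "((\<lambda>u. LBINT y=ereal 0..ereal u. f y) has_real_derivative f x) (at x)"
proof -
  have "((\<lambda>u. LBINT y=ereal 0..ereal u. f y) has_vector_derivative f x)
          (at x within {min 0 x - 1..max 0 x + 1})"
    by (rule interval_integral_FTC2) (auto intro: continuous_on_subset[OF assms])
  then have "((\<lambda>u. LBINT y=ereal 0..ereal u. f y) has_vector_derivative f x) (at x)"
    by (subst (asm) at_within_Icc_at) auto
  then show ?thesis
    by (simp add: has_real_derivative_iff_has_vector_derivative)
qed

lemma interval_integral_eq_primitive_diff:
  fixes f :: "real \<Rightarrow> real"
  assumes "continuous_on UNIV f"
  shows "(LBINT y=ereal a..ereal b. f y)
           = (LBINT y=ereal 0..ereal b. f y) - (LBINT y=ereal 0..ereal a. f y)"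
  by (rule interval_integral_FTC_finite)
    (use continuous_on_subset[OF assms] primitive_has_real_derivative[OF assms]
      in \<open>auto simp: has_real_derivative_iff_has_vector_derivative has_vector_derivative_at_within\<close>)

lemma primitive_odd_if_even:
  fixes f :: "real \<Rightarrow> real"
  assumes "continuous_on UNIV f" and even: "\<And>s. f (- s) = f s"
  shows "(LBINT y=ereal 0..ereal (- x). f y) = - (LBINT y=ereal 0..ereal x. f y)"
proof -
  define G where "G u = (LBINT y=ereal 0..ereal u. f y)" for u
  have G': "(G has_real_derivative f x) (at x)" for x
    unfolding G_def by (rule primitive_has_real_derivative[OF assms(1)])
  have "\<forall>x. ((\<lambda>x. G (- x) + G x) has_real_derivative 0) (at x)"
    using DERIV_add[OF DERIV_chain2[OF G' DERIV_minus[OF DERIV_ident]] G']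
    by (simp add: even)
  from DERIV_isconst_all[OF this, of x 0] show ?thesis
    by (simp add: G_def)
qed

lemma abs_diff_le_of_bounded_derivative:
  fixes g g' :: "real \<Rightarrow> real"
  assumes "\<And>x. (g has_real_derivative g' x) (at x)" and "\<And>x. \<bar>g' x\<bar> \<le> C"
  shows "\<bar>g b - g a\<bar> \<le> C * \<bar>b - a\<bar>"
proof -
  have *: "\<bar>g v - g u\<bar> \<le> C * \<bar>v - u\<bar>" if uv: "u < v" for u v
  proof -
    obtain z where "g v - g u = (v - u) * g' z"
      using MVT2[OF uv, of g g'] assms(1) by blast
    then show ?thesis
      using assms(2)[of z] uv by (simp add: abs_mult mult.commute mult_right_mono)
  qed
  show ?thesis
    using *[of a b] *[of b a] by (cases a b rule: linorder_cases) (auto simp: abs_minus_commute)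
qed

text \<open>
  The functions g + K/q exp (-q x) and g - K/q exp (-q x) are monotone in opposite directions
  and squeeze L, taken as the supremum of the increasing one.
\<close>

lemma exp_decaying_derivative_imp_limit:
  fixes g g' :: "real \<Rightarrow> real"
  assumes q: "0 < q"
    and g': "\<And>x. 0 \<le> x \<Longrightarrow> (g has_real_derivative g' x) (at x)"
    and bound: "\<And>x. 0 \<le> x \<Longrightarrow> \<bar>g' x\<bar> \<le> K * exp (- q * x)"
  shows "\<exists>L. \<forall>x\<ge>0. \<bar>g x - L\<bar> \<le> K / q * exp (- q * x)"
proof -
  define upper where "upper y = g y + K / q * exp (- q * y)" for y
  define lower where "lower y = g y - K / q * exp (- q * y)" for y
  have K: "0 \<le> K"
    using bound[of 0] by simp
  have upper': "(upper has_real_derivative g' t - K * exp (- q * t)) (at t)"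
    and lower': "(lower has_real_derivative g' t + K * exp (- q * t)) (at t)" if "0 \<le> t" for t
    unfolding upper_def lower_def using g'[OF that] q by (auto intro!: derivative_eq_intros)
  have upper_mono: "upper y \<le> upper x" if "0 \<le> x" "x \<le> y" for x y
  proof (rule DERIV_nonpos_imp_nonincreasing[OF that(2)])
    fix t assume "x \<le> t"
    with that show "\<exists>d. (upper has_real_derivative d) (at t) \<and> d \<le> 0"
      using upper'[of t] bound[of t] by (intro exI[of _ "g' t - K * exp (- q * t)"]) auto
  qed
  have lower_mono: "lower x \<le> lower y" if "0 \<le> x" "x \<le> y" for x y
  proof (rule DERIV_nonneg_imp_nondecreasing[OF that(2)])
    fix t assume "x \<le> t"
    with that show "\<exists>d. (lower has_real_derivative d) (at t) \<and> 0 \<le> d"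
      using lower'[of t] bound[of t] by (intro exI[of _ "g' t + K * exp (- q * t)"]) auto
  qed
  have lower_le_upper: "lower y \<le> upper y" for y
    using K q by (simp add: lower_def upper_def)
  define L where "L = Sup (lower ` {0..})"
  have "bdd_above (lower ` {0..})"
    using upper_mono[of 0] lower_le_upper by (intro bdd_aboveI2[of _ _ "upper 0"]) (auto intro: order_trans)
  then have lower_le_L: "lower x \<le> L" if "0 \<le> x" for x
    unfolding L_def using that by (intro cSup_upper) auto
  have L_le_upper: "L \<le> upper x" if "0 \<le> x" for x
    unfolding L_def
  proof (rule cSup_least)
    fix z assume "z \<in> lower ` {0..}"
    then obtain y where "0 \<le> y" "z = lower y" by auto
    then show "z \<le> upper x"
      using lower_mono[of y x] upper_mono[of x y] lower_le_upper[of x] lower_le_upper[of y] that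
      by (cases "y \<le> x") auto
  qed auto
  show ?thesis
    using lower_le_L L_le_upper unfolding lower_def upper_def
    by (intro exI[of _ L] allI impI) (fastforce simp: abs_le_iff)
qed

lemma one_minus_tanh_sq_le: "1 - tanh (t::real) ^ 2 \<le> 4 * exp (-2 * \<bar>t\<bar>)"
proof -
  define e where "e = exp (-2 * \<bar>t\<bar>)"
  have e: "0 < e" unfolding e_def by simp
  have "tanh t ^ 2 = tanh \<bar>t\<bar> ^ 2"
    by simp
  also have "tanh \<bar>t\<bar> = (1 - e) / (1 + e)"
    unfolding e_def tanh_real_altdef by simp
  finally have "1 - tanh t ^ 2 = 1 - ((1 - e) / (1 + e)) ^ 2"
    by simp
  also have "\<dots> = ((1 + e) ^ 2 - (1 - e) ^ 2) / (1 + e) ^ 2"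
    unfolding power_divide using e by (simp add: diff_divide_distrib)
  also have "\<dots> = 4 * e / (1 + e) ^ 2"
    by (simp add: power2_eq_square algebra_simps)
  also have "\<dots> \<le> 4 * e"
    using e by (simp add: divide_le_eq mult_le_cancel_left1 one_le_power)
  finally show ?thesis unfolding e_def .
qed

lemma one_minus_tanh_le:
  assumes "(y::real) \<ge> 0"
  shows "1 - tanh y \<le> 2 * exp (-2 * y)"
proof -
  define e where "e = exp (-2 * y)"
  have e: "0 < e" unfolding e_def by simp
  have "tanh y = (1 - e) / (1 + e)"
    unfolding e_def tanh_real_altdef by simp
  then have "1 - tanh y = 2 * e / (1 + e)"
    using e by (simp add: field_simps)
  also have "\<dots> \<le> 2 * e"
    using e by (simp add: field_simps)
  finally show ?thesis unfolding e_def .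
qed

lemma abs_tanh_shift_diff_le:
  fixes q \<nu> X :: real
  assumes "0 < q" "0 < \<nu>" "\<nu> < 1"
  shows "\<bar>tanh (q * X + q * \<nu>) - tanh (q * X)\<bar> \<le> 4 * q * \<nu> * exp (2 * q) * exp (-2 * q * \<bar>X\<bar>)"
proof -
  have "(tanh has_real_derivative (1 - tanh x ^ 2)) (at x)" for x :: real
    by (auto intro!: derivative_eq_intros simp: cosh_real_pos[THEN less_imp_neq, symmetric])
  then obtain z where z: "q * X < z" "z < q * X + q * \<nu>"
    and diff: "tanh (q * X + q * \<nu>) - tanh (q * X) = (q * \<nu>) * (1 - tanh z ^ 2)"
    using MVT2[of "q * X" "q * X + q * \<nu>" tanh "\<lambda>x. 1 - tanh x ^ 2"] assms by auto
  have "0 \<le> 1 - tanh z ^ 2"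
    using tanh_real_bounds[of z] by (auto simp: abs_square_le_1 abs_le_iff)
  moreover have "q * \<bar>X\<bar> - q \<le> \<bar>z\<bar>"
  proof -
    have "q * \<nu> \<le> q" "q * \<bar>X\<bar> = \<bar>q * X\<bar>"
      using assms by (simp_all add: abs_mult)
    then show ?thesis
      using z by linarith
  qed
  then have "exp (-2 * \<bar>z\<bar>) \<le> exp (2 * q) * exp (-2 * q * \<bar>X\<bar>)"
    by (simp add: exp_add[symmetric])
  ultimately show ?thesis
    using diff one_minus_tanh_sq_le[of z] assms by (simp add: abs_mult)
qed

lemma perturbed_endpoint_integral_diff_bound:
  fixes f :: "real \<Rightarrow> real" and \<theta> \<nu> C q X :: real
  assumes cont: "continuous_on UNIV f" and f_bound: "\<And>s. \<bar>f s\<bar> \<le> C"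
    and \<theta>: "0 \<le> \<theta>" "\<theta> \<le> C * \<nu>\<^sup>2" and \<nu>: "0 < \<nu>" "\<nu> < 1" and q: "0 < q"
  shows "\<nu> powr (-3) * exp (2 * q * \<bar>X\<bar>) *
        \<bar>(LBINT s = ereal (X + \<theta> * tanh (q * X))..ereal (X + \<nu> + \<theta> * tanh (q * X + q * \<nu>)). f s)
         - (LBINT s = ereal (X + \<theta> * tanh (q * X))..ereal (X + \<nu> + \<theta> * tanh (q * X)). f s)\<bar>
       \<le> 4 * C\<^sup>2 * q * exp (2 * q)"
proof -
  define G where "G u = (LBINT y=ereal 0..ereal u. f y)" for u
  define a where "a = X + \<theta> * tanh (q * X)"
  define b\<^sub>1 where "b\<^sub>1 = X + \<nu> + \<theta> * tanh (q * X + q * \<nu>)"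
  define b\<^sub>2 where "b\<^sub>2 = X + \<nu> + \<theta> * tanh (q * X)"
  have C: "0 \<le> C"
    using f_bound[of 0] by linarith
  have "\<bar>G b\<^sub>1 - G b\<^sub>2\<bar> \<le> C * \<bar>b\<^sub>1 - b\<^sub>2\<bar>"
    unfolding G_def by (rule abs_diff_le_of_bounded_derivative[OF primitive_has_real_derivative[OF cont] f_bound])
  also have "\<bar>b\<^sub>1 - b\<^sub>2\<bar> = \<theta> * \<bar>tanh (q * X + q * \<nu>) - tanh (q * X)\<bar>"
    unfolding b\<^sub>1_def b\<^sub>2_def using \<theta> by (simp add: abs_mult right_diff_distrib[symmetric])
  also have "\<dots> \<le> (C * \<nu>\<^sup>2) * (4 * q * \<nu> * exp (2 * q) * exp (-2 * q * \<bar>X\<bar>))"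
    using \<theta> by (intro mult_mono abs_tanh_shift_diff_le q \<nu>) auto
  finally have "\<bar>G b\<^sub>1 - G b\<^sub>2\<bar> \<le> C * ((C * \<nu>\<^sup>2) * (4 * q * \<nu> * exp (2 * q) * exp (-2 * q * \<bar>X\<bar>)))"
    using C by (simp add: mult_left_mono)
  then have "\<bar>G b\<^sub>1 - G b\<^sub>2\<bar> \<le> 4 * C\<^sup>2 * q * exp (2 * q) * (\<nu> ^ 3 * exp (-2 * q * \<bar>X\<bar>))"
    by (simp add: power2_eq_square power3_eq_cube ac_simps)
  moreover have "(LBINT s = ereal a..ereal b\<^sub>1. f s) - (LBINT s = ereal a..ereal b\<^sub>2. f s) = G b\<^sub>1 - G b\<^sub>2"
    unfolding G_def
    using interval_integral_eq_primitive_diff[OF cont, of a b\<^sub>1]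
      interval_integral_eq_primitive_diff[OF cont, of a b\<^sub>2] by linarith
  ultimately have "\<nu> powr (-3) * exp (2 * q * \<bar>X\<bar>) *
      \<bar>(LBINT s = ereal a..ereal b\<^sub>1. f s) - (LBINT s = ereal a..ereal b\<^sub>2. f s)\<bar>
      \<le> \<nu> powr (-3) * exp (2 * q * \<bar>X\<bar>) * (4 * C\<^sup>2 * q * exp (2 * q) * (\<nu> ^ 3 * exp (-2 * q * \<bar>X\<bar>)))"
    by (simp add: mult_left_mono)
  also have "\<dots> = 4 * C\<^sup>2 * q * exp (2 * q)"
    using \<nu> by (simp add: powr_minus powr_realpow exp_minus field_simps)
  finally show ?thesis
    unfolding a_def b\<^sub>1_def b\<^sub>2_def .
qed

lemma tanh_profile_bound_of_limit_rate:
  fixes g :: "real \<Rightarrow> real"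
  assumes limit: "\<bar>g Y - L\<bar> \<le> K / q * exp (- q * Y)" and L_bound: "\<bar>L\<bar> \<le> K / q"
    and Y: "0 \<le> Y" and q: "0 < q" "q \<le> qs"
  shows "exp (q * Y) * \<bar>g Y - L * tanh (qs * Y / 2)\<bar> \<le> 3 * K / q"
proof -
  define t where "t = tanh (qs * Y / 2)"
  have K: "0 \<le> K"
    using L_bound q by (meson abs_ge_zero order_trans zero_le_divide_iff less_le_not_le)
  have t_le: "t \<le> 1"
    using tanh_real_lt_1[of "qs * Y / 2"] unfolding t_def by simp
  have "1 - t \<le> 2 * exp (-2 * (qs * Y / 2))"
    unfolding t_def using Y q by (intro one_minus_tanh_le) simp
  also have "\<dots> \<le> 2 * exp (- q * Y)"
    using Y q by (simp add: mult_right_mono)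
  finally have tail: "1 - t \<le> 2 * exp (- q * Y)" .
  have "\<bar>g Y - L * t\<bar> = \<bar>(g Y - L) + L * (1 - t)\<bar>"
    by (simp add: algebra_simps)
  also have "\<dots> \<le> \<bar>g Y - L\<bar> + \<bar>L\<bar> * (1 - t)"
    using abs_triangle_ineq[of "g Y - L" "L * (1 - t)"] t_le by (simp add: abs_mult)
  also have "\<dots> \<le> K / q * exp (- q * Y) + K / q * (2 * exp (- q * Y))"
    using K q t_le by (intro add_mono limit mult_mono L_bound tail) auto
  finally have "\<bar>g Y - L * t\<bar> \<le> 3 * K / q * exp (- q * Y)"
    by simp
  then have "exp (q * Y) * \<bar>g Y - L * t\<bar> \<le> exp (q * Y) * (3 * K / q * exp (- q * Y))"
    by (rule mult_left_mono) simp
  also have "\<dots> = 3 * K / q"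
    by (simp add: exp_minus)
  finally show ?thesis
    unfolding t_def .
qed

lemma primitive_approx_by_tanh:
  fixes f :: "real \<Rightarrow> real" and q qs K :: real
  assumes cont: "continuous_on UNIV f" and even: "\<And>s. f (- s) = f s"
    and decay: "\<And>x. exp (q * \<bar>x\<bar>) * \<bar>f x\<bar> \<le> K" and q: "0 < q" "q \<le> qs"
  shows "\<exists>L. \<forall>X. exp (q * \<bar>X\<bar>) * \<bar>(LBINT s = ereal 0..ereal X. f s) - L * tanh (qs * X / 2)\<bar>
                 + \<bar>L\<bar> \<le> 4 * K / q"
proof -
  define G where "G u = (LBINT y=ereal 0..ereal u. f y)" for u
  have "\<bar>f x\<bar> \<le> K * exp (- q * x)" if "0 \<le> x" for x
    using decay[of x] that by (simp add: exp_minus field_simps)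
  moreover have "(G has_real_derivative f x) (at x)" for x
    unfolding G_def by (rule primitive_has_real_derivative[OF cont])
  ultimately obtain L where L: "\<And>x. 0 \<le> x \<Longrightarrow> \<bar>G x - L\<bar> \<le> K / q * exp (- q * x)"
    using exp_decaying_derivative_imp_limit[OF q(1), of G f K] by blast
  have L_bound: "\<bar>L\<bar> \<le> K / q"
    using L[of 0] by (simp add: G_def)
  have approx_nonneg: "exp (q * Y) * \<bar>G Y - L * tanh (qs * Y / 2)\<bar> \<le> 3 * K / q" if "0 \<le> Y" for Y
    using L[OF that] L_bound that q by (rule tanh_profile_bound_of_limit_rate)
  have approx: "exp (q * \<bar>X\<bar>) * \<bar>G X - L * tanh (qs * X / 2)\<bar> \<le> 3 * K / q" for X
  proof (cases "0 \<le> X")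
    case True
    then show ?thesis using approx_nonneg[of X] by simp
  next
    case False
    have "G X - L * tanh (qs * X / 2) = - (G (- X) - L * tanh (qs * (- X) / 2))"
      using primitive_odd_if_even[OF cont even, of X] by (simp add: G_def)
    then have "\<bar>G X - L * tanh (qs * X / 2)\<bar> = \<bar>G (- X) - L * tanh (qs * (- X) / 2)\<bar>"
      by (simp only: abs_minus_cancel)
    with approx_nonneg[of "- X"] False show ?thesis
      by simp
  qed
  have "exp (q * \<bar>X\<bar>) * \<bar>G X - L * tanh (qs * X / 2)\<bar> + \<bar>L\<bar> \<le> 4 * K / q" for X
    using add_mono[OF approx L_bound] by (simp add: add_divide_distrib[symmetric])
  then show ?thesis
    unfolding G_def by blast
qed

theorem lemmaB3:
  fixes I1 I2 :: "real set"
    and f :: "real \<Rightarrow> real \<Rightarrow> real \<Rightarrow> real"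
    and \<theta> :: "real \<Rightarrow> real \<Rightarrow> real"
    and C qs :: real
  assumes I1: "I1 \<subseteq> {0<..<1}"
    and C_pos: "C > 0"
    and f_even: "\<And>\<nu> \<alpha> s. \<nu> \<in> I1 \<Longrightarrow> \<alpha> \<in> I2 \<Longrightarrow> f \<nu> \<alpha> (- s) = f \<nu> \<alpha> s"
    and f_cont: "\<And>\<nu> \<alpha>. \<nu> \<in> I1 \<Longrightarrow> \<alpha> \<in> I2 \<Longrightarrow> continuous_on UNIV (f \<nu> \<alpha>)"
    and f_bound: "\<And>\<nu> \<alpha> s. \<nu> \<in> I1 \<Longrightarrow> \<alpha> \<in> I2 \<Longrightarrow> \<bar>f \<nu> \<alpha> s\<bar> \<le> C"
    and \<theta>_nonneg: "\<And>\<nu> \<alpha>. \<nu> \<in> I1 \<Longrightarrow> \<alpha> \<in> I2 \<Longrightarrow> 0 \<le> \<theta> \<nu> \<alpha>"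
    and \<theta>_bound: "\<And>\<nu> \<alpha>. \<nu> \<in> I1 \<Longrightarrow> \<alpha> \<in> I2 \<Longrightarrow> \<theta> \<nu> \<alpha> \<le> C * \<nu>\<^sup>2"
    and qs_pos: "qs > 0"
  shows
    "(\<exists>M. \<forall>\<nu>\<in>I1. \<forall>\<alpha>\<in>I2. \<forall>X::real.
        \<nu> powr (-3) * exp (2 * qs * \<bar>X\<bar>) *
        \<bar>(LBINT s = ereal (X + \<theta> \<nu> \<alpha> * tanh (qs * X))
                  ..ereal (X + \<nu> + \<theta> \<nu> \<alpha> * tanh (qs * X + qs * \<nu>)). f \<nu> \<alpha> s)
         - (LBINT s = ereal (X + \<theta> \<nu> \<alpha> * tanh (qs * X))
                  ..ereal (X + \<nu> + \<theta> \<nu> \<alpha> * tanh (qs * X)). f \<nu> \<alpha> s)\<bar> \<le> M)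
     \<and> (\<forall>q::real. 0 < q \<and> q < qs \<and>
          (\<exists>K. \<forall>\<nu>\<in>I1. \<forall>\<alpha>\<in>I2. \<forall>X::real. exp (q * \<bar>X\<bar>) * \<bar>f \<nu> \<alpha> X\<bar> \<le> K)
        \<longrightarrow> (\<exists>L :: real \<Rightarrow> real \<Rightarrow> real. \<exists>M. \<forall>\<nu>\<in>I1. \<forall>\<alpha>\<in>I2.
               (\<forall>X::real. exp (q * \<bar>X\<bar>) *
                  \<bar>(LBINT s = ereal 0..ereal X. f \<nu> \<alpha> s) - L \<nu> \<alpha> * tanh (qs * X / 2)\<bar>
                  + \<bar>L \<nu> \<alpha>\<bar> \<le> M)))"
proof (intro conjI allI impI)
  show "\<exists>M. \<forall>\<nu>\<in>I1. \<forall>\<alpha>\<in>I2. \<forall>X. \<nu> powr (-3) * exp (2 * qs * \<bar>X\<bar>) *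
      \<bar>(LBINT s = ereal (X + \<theta> \<nu> \<alpha> * tanh (qs * X))..ereal (X + \<nu> + \<theta> \<nu> \<alpha> * tanh (qs * X + qs * \<nu>)). f \<nu> \<alpha> s)
       - (LBINT s = ereal (X + \<theta> \<nu> \<alpha> * tanh (qs * X))..ereal (X + \<nu> + \<theta> \<nu> \<alpha> * tanh (qs * X)). f \<nu> \<alpha> s)\<bar> \<le> M"
    using I1 by (intro exI[of _ "4 * C\<^sup>2 * qs * exp (2 * qs)"] ballI allI
        perturbed_endpoint_integral_diff_bound f_cont f_bound
        \<theta>_nonneg \<theta>_bound qs_pos) auto
next
  fix q
  assume "0 < q \<and> q < qs \<and> (\<exists>K. \<forall>\<nu>\<in>I1. \<forall>\<alpha>\<in>I2. \<forall>X. exp (q * \<bar>X\<bar>) * \<bar>f \<nu> \<alpha> X\<bar> \<le> K)"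
  then obtain K where q: "0 < q" "q \<le> qs"
    and decay: "\<And>\<nu> \<alpha> X. \<nu> \<in> I1 \<Longrightarrow> \<alpha> \<in> I2 \<Longrightarrow> exp (q * \<bar>X\<bar>) * \<bar>f \<nu> \<alpha> X\<bar> \<le> K"
    by auto
  have "\<forall>\<nu>\<in>I1. \<forall>\<alpha>\<in>I2. \<exists>L. \<forall>X. exp (q * \<bar>X\<bar>) *
      \<bar>(LBINT s = ereal 0..ereal X. f \<nu> \<alpha> s) - L * tanh (qs * X / 2)\<bar> + \<bar>L\<bar> \<le> 4 * K / q"
    by (blast intro: primitive_approx_by_tanh f_cont f_even decay q)
  then show "\<exists>L M. \<forall>\<nu>\<in>I1. \<forall>\<alpha>\<in>I2. \<forall>X. exp (q * \<bar>X\<bar>) *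
      \<bar>(LBINT s = ereal 0..ereal X. f \<nu> \<alpha> s) - L \<nu> \<alpha> * tanh (qs * X / 2)\<bar> + \<bar>L \<nu> \<alpha>\<bar> \<le> M"
    by metis
qed

end
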